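(* Let $C,D\subseteq\mathbb{R}^n$ be convex cones (nonempty, closed under addition and multiplication by nonnegative reals) that are closed and have nonempty interior in the Euclidean topology, and suppose $\langle c,d\rangle\ge0$ for all $c\in C$, $d\in D$, where $\langle\cdot,\cdot\rangle$ is the standard inner product. Equip $D$ with the weak upper topology $w(D,C)$. Then for every linear functional $\varphi\colon D\to[0,\infty)$ which is lower semicontinuous with respect to $w(D,C)$ there is a unique $x\in C$ such that $\varphi(y)=\langle x,y\rangle$ for all $y\in D$.
   Context: $[0,\infty)$ and $\overline{\mathbb{R}}_+=[0,+\infty]$ carry the upper topology, whose open sets are $\emptyset$, the whole space and the intervals $\{t\mid t>r\}$ for $r\in[0,\infty)$; a function is lower semicontinuous if it is continuous into this topology. The weak upper topology $w(D,C)$ on $D$ is the coarsest topology making all maps $y\mapsto\langle x,y\rangle$, $x\in C$, lower semicontinuous. A functional $\varphi\colon D\to[0,\infty)$ is linear if $\varphi(y+z)=\varphi(y)+\varphi(z)$ and $\varphi(ry)=r\varphi(y)$ for all $y,z\in D$, $r\ge0$. *)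

theory Defs
  imports "HOL-Analysis.Analysis"
begin

text \<open>The upper topology on [0,\<infinity>): open sets are the empty set, the whole space
  and the rays {t. t > r} for r \<ge> 0 (the topology generated by these sets has
  exactly these open sets, since they form a chain closed under unions).\<close>
definition upper_topology :: "real topology" where
  "upper_topology = topology_generated_by ({{0..}} \<union> {{t. r < t} | r. 0 \<le> r})"

definition lsc_map :: "'a topology \<Rightarrow> ('a \<Rightarrow> real) \<Rightarrow> bool" where
  "lsc_map X f \<longleftrightarrow> continuous_map X upper_topology f"

text \<open>The weak upper topology w(D,C) on D: the coarsest topology on D making all
  maps y \<mapsto> \<langle>x,y\<rangle>, x \<in> C, lower semicontinuous (initial topology, generated by
  D itself and the preimages of upper-open sets).\<close>
definition weak_upper_topology :: "'a::real_inner set \<Rightarrow> 'a set \<Rightarrow> 'a topology" where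
  "weak_upper_topology D C = topology_generated_by
     ({D} \<union> {{y \<in> D. inner x y \<in> U} | x U. x \<in> C \<and> openin upper_topology U})"

definition linear_on_cone :: "'a::real_vector set \<Rightarrow> ('a \<Rightarrow> real) \<Rightarrow> bool" where
  "linear_on_cone D \<phi> \<longleftrightarrow>
     (\<forall>y\<in>D. \<forall>z\<in>D. \<phi> (y + z) = \<phi> y + \<phi> z) \<and>
     (\<forall>y\<in>D. \<forall>r::real. 0 \<le> r \<longrightarrow> \<phi> (r *\<^sub>R y) = r * \<phi> y)"

end

theory Submission
  imports Defs
begin

text \<open>A functional that is additive and positively homogeneous on a cone with nonempty
  interior extends uniquely to a linear functional on the whole space, so it is
  \<open>\<langle>x, -\<rangle>\<close> for a unique \<open>x\<close>. Open sets of \<open>w(D,C)\<close> are upward closed for the preorder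
  \<open>y \<preceq> z \<longleftrightarrow> (\<forall>c\<in>C. \<langle>c,y\<rangle> \<le> \<langle>c,z\<rangle>)\<close>, so a lower semicontinuous \<open>\<phi>\<close> is monotone for it.
  If \<open>x \<notin> C\<close>, a hyperplane separating \<open>x\<close> from the closed cone \<open>C\<close> gives a direction
  \<open>a\<close> with \<open>\<langle>c,a\<rangle> \<ge> 0\<close> on \<open>C\<close> but \<open>\<langle>x,a\<rangle> < 0\<close>; moving from an interior point \<open>y\<close> of \<open>D\<close>
  slightly in direction \<open>a\<close> increases \<open>y\<close> for \<open>\<preceq>\<close> while strictly decreasing \<open>\<phi>\<close>.\<close>

lemma interior_ray_step:
  fixes S :: "'a::real_normed_vector set"
  assumes "y \<in> interior S"
  obtains t where "t > 0" "y + t *\<^sub>R v \<in> S"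
proof -
  have "((\<lambda>t. y + t *\<^sub>R v) \<longlongrightarrow> y) (at_right 0)"
    by (intro tendsto_eq_intros) auto
  then have "\<forall>\<^sub>F t in at_right 0. y + t *\<^sub>R v \<in> S"
    using eventually_nhds_in_nhd[OF assms] unfolding filterlim_iff by blast
  then have "\<forall>\<^sub>F t in at_right (0::real). t > 0 \<and> y + t *\<^sub>R v \<in> S"
    by (simp add: eventually_conj_iff eventually_at_right_less)
  then show thesis
    using that eventually_happens'[OF trivial_limit_at_right_real] by blast
qed

lemma convex_cone_interior_diff:
  fixes D :: "'a::real_normed_vector set"
  assumes "convex_cone D" "interior D \<noteq> {}"
  obtains a b where "a \<in> D" "b \<in> D" "v = a - b"
proof -
  obtain y where y: "y \<in> interior D" using assms(2) by blast
  then obtain t where t: "t > 0" "y + t *\<^sub>R v \<in> D" by (rule interior_ray_step)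
  have "y \<in> D" using y interior_subset by blast
  then have "(1 / t) *\<^sub>R (y + t *\<^sub>R v) \<in> D" "(1 / t) *\<^sub>R y \<in> D"
    using t convex_cone_scaleR[OF assms(1)] by auto
  moreover have "v = (1 / t) *\<^sub>R (y + t *\<^sub>R v) - (1 / t) *\<^sub>R y"
    using t by (simp add: algebra_simps)
  ultimately show thesis by (rule that)
qed

lemma inner_eq_on_interior_imp_eq:
  fixes x x' :: "'a::real_inner"
  assumes "interior D \<noteq> {}" "\<forall>y\<in>D. inner x y = inner x' y"
  shows "x = x'"
proof -
  obtain y where y: "y \<in> interior D" using assms(1) by blast
  then obtain t where t: "t > 0" "y + t *\<^sub>R (x - x') \<in> D" by (rule interior_ray_step)
  have "inner (x - x') (y + t *\<^sub>R (x - x')) = 0" "inner (x - x') y = 0"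
    using assms(2) t(2) y interior_subset by (auto simp: inner_diff_left)
  then have "t * inner (x - x') (x - x') = 0" by (simp add: inner_add_right)
  then show ?thesis using t(1) by simp
qed

lemma linear_on_cone_extends_linear:
  fixes D :: "'a::real_normed_vector set"
  assumes "convex_cone D" "interior D \<noteq> {}" "linear_on_cone D \<phi>"
  obtains L where "linear L" "\<And>y. y \<in> D \<Longrightarrow> L y = \<phi> y"
proof -
  have add: "\<phi> (y + z) = \<phi> y + \<phi> z" if "y \<in> D" "z \<in> D" for y z
    using assms(3) that unfolding linear_on_cone_def by blast
  have scale: "\<phi> (r *\<^sub>R y) = r * \<phi> y" if "y \<in> D" "0 \<le> r" for y r
    using assms(3) that unfolding linear_on_cone_def by blast
  have "\<forall>v. \<exists>p q. p \<in> D \<and> q \<in> D \<and> p - q = v"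
    using convex_cone_interior_diff[OF assms(1,2)] by metis
  then obtain a b where ab: "\<And>v. a v \<in> D" "\<And>v. b v \<in> D" "\<And>v. a v - b v = v"
    by metis
  define L where "L v = \<phi> (a v) - \<phi> (b v)" for v
  have L_eq: "L v = \<phi> p - \<phi> q" if "p \<in> D" "q \<in> D" "v = p - q" for v p q
  proof -
    have "a v - b v = p - q" using ab(3) that(3) by simp
    then have "a v + q = p + b v" by (metis add.commute diff_add_eq diff_eq_eq)
    then have "\<phi> (a v) + \<phi> q = \<phi> p + \<phi> (b v)"
      using add ab that by metis
    then show ?thesis unfolding L_def by linarith
  qed
  have "L (u + v) = L u + L v" for u v
  proof -
    have "u + v = (a u + a v) - (b u + b v)" by (simp add: add_diff_add ab(3))
    then show ?thesis
      using L_eq[OF convex_cone_add[OF assms(1)] convex_cone_add[OF assms(1)]] add ab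
      unfolding L_def by simp
  qed
  moreover have "L (r *\<^sub>R v) = r * L v" for r v
  proof (cases "0 \<le> r")
    case True
    have "r *\<^sub>R v = r *\<^sub>R a v - r *\<^sub>R b v" by (simp add: ab(3) flip: scaleR_diff_right)
    then show ?thesis
      using L_eq[OF convex_cone_scaleR[OF assms(1)] convex_cone_scaleR[OF assms(1)]] scale ab True
      unfolding L_def by (simp add: right_diff_distrib)
  next
    case False
    then have "0 \<le> - r" by simp
    have "(- r) *\<^sub>R b v - (- r) *\<^sub>R a v = r *\<^sub>R (a v - b v)"
      by (simp add: algebra_simps)
    then have "r *\<^sub>R v = (- r) *\<^sub>R b v - (- r) *\<^sub>R a v" by (simp add: ab(3))
    then have "L (r *\<^sub>R v) = \<phi> ((- r) *\<^sub>R b v) - \<phi> ((- r) *\<^sub>R a v)"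
      using L_eq convex_cone_scaleR[OF assms(1) \<open>0 \<le> - r\<close>] ab by blast
    also have "\<dots> = r * L v"
      using scale[OF ab(1) \<open>0 \<le> - r\<close>] scale[OF ab(2) \<open>0 \<le> - r\<close>]
      unfolding L_def by (simp add: algebra_simps)
    finally show ?thesis .
  qed
  ultimately have "linear L" by (intro linearI) auto
  moreover have "L y = \<phi> y" if "y \<in> D" for y
    using L_eq[of y 0 y] that convex_cone_contains_0[OF assms(1)] scale[of y 0] by auto
  ultimately show thesis by (rule that)
qed

lemma linear_on_cone_eq_inner:
  fixes D :: "'a::euclidean_space set"
  assumes "convex_cone D" "interior D \<noteq> {}" "linear_on_cone D \<phi>"
  obtains x where "\<forall>y\<in>D. \<phi> y = inner x y"
proof -
  obtain L where "linear L" "\<And>y. y \<in> D \<Longrightarrow> L y = \<phi> y"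
    using linear_on_cone_extends_linear[OF assms] by blast
  then have "\<forall>y\<in>D. \<phi> y = inner (adjoint L 1) y"
    using adjoint_works[of L _ 1] by (simp add: inner_commute)
  then show thesis by (rule that)
qed

lemma topspace_upper_topology: "topspace upper_topology = {0..}"
  unfolding upper_topology_def by auto

lemma openin_upper_topology_ray: "0 \<le> r \<Longrightarrow> openin upper_topology {t. r < t}"
  unfolding upper_topology_def by (rule topology_generated_by_Basis) blast

lemma openin_upper_topology_upward:
  assumes "openin upper_topology U" "a \<in> U" "a \<le> b"
  shows "b \<in> U"
  using openin_topology_generated_by[OF assms(1)[unfolded upper_topology_def]] assms(2,3)
  by (induction arbitrary: a rule: generate_topology_on.induct)
    (auto intro: order_trans less_le_trans)

lemma topspace_weak_upper_topology: "topspace (weak_upper_topology D C) = D"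
  unfolding weak_upper_topology_def by auto

lemma openin_weak_upper_topology_upward:
  assumes "openin (weak_upper_topology D C) U" "y \<in> U" "z \<in> D"
    and "\<forall>c\<in>C. inner c y \<le> inner c z"
  shows "z \<in> U"
  using openin_topology_generated_by[OF assms(1)[unfolded weak_upper_topology_def]] assms(2-4)
proof (induction rule: generate_topology_on.induct)
  case (Basis S)
  then show ?case
    using openin_upper_topology_upward by blast
qed auto

lemma lsc_weak_upper_topology_mono:
  assumes "lsc_map (weak_upper_topology D C) f" "y \<in> D" "z \<in> D"
    and "\<forall>c\<in>C. inner c y \<le> inner c z"
  shows "f y \<le> f z"
proof (rule ccontr)
  assume "\<not> f y \<le> f z"
  have "f z \<ge> 0"
    using assms(1,3) unfolding lsc_map_def continuous_map_def
    by (auto simp: topspace_upper_topology topspace_weak_upper_topology)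
  then have "openin (weak_upper_topology D C) {x \<in> D. f x \<in> {t. f z < t}}"
    using assms(1) openin_upper_topology_ray unfolding lsc_map_def continuous_map_def
    by (metis topspace_weak_upper_topology)
  then show False
    using openin_weak_upper_topology_upward assms(2-4) \<open>\<not> f y \<le> f z\<close> by fastforce
qed

lemma closed_convex_cone_separation:
  fixes C :: "'a::euclidean_space set"
  assumes "convex_cone C" "closed C" "x \<notin> C"
  obtains a where "inner a x < 0" "\<forall>c\<in>C. 0 \<le> inner a c"
proof -
  obtain a b where ab: "inner a x < b" "\<forall>c\<in>C. b < inner a c"
    using separating_hyperplane_closed_point assms convex_cone_def by metis
  have "b < 0" using ab(2) convex_cone_contains_0[OF assms(1)] by auto
  have "0 \<le> inner a c" if "c \<in> C" for c
  proof (rule ccontr)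
    assume "\<not> 0 \<le> inner a c"
    then have "b / inner a c \<ge> 0" using \<open>b < 0\<close> by (simp add: divide_nonpos_neg)
    then have "b < inner a ((b / inner a c) *\<^sub>R c)"
      using ab(2) convex_cone_scaleR[OF assms(1) _ that] by blast
    then show False using \<open>\<not> 0 \<le> inner a c\<close> by simp
  qed
  then show thesis using that ab(1) \<open>b < 0\<close> by force
qed

lemma lsc_weak_upper_inner_mem_cone:
  fixes C D :: "'a::euclidean_space set"
  assumes "convex_cone C" "closed C" "interior D \<noteq> {}"
    and "lsc_map (weak_upper_topology D C) \<phi>" "\<forall>y\<in>D. \<phi> y = inner x y"
  shows "x \<in> C"
proof (rule ccontr)
  assume "x \<notin> C"
  then obtain a where a: "inner a x < 0" "\<forall>c\<in>C. 0 \<le> inner a c"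
    using closed_convex_cone_separation assms(1,2) by blast
  obtain y where y: "y \<in> interior D" using assms(3) by blast
  then obtain t where t: "t > 0" "y + t *\<^sub>R a \<in> D" by (rule interior_ray_step)
  have "y \<in> D" using y interior_subset by blast
  have "\<forall>c\<in>C. inner c y \<le> inner c (y + t *\<^sub>R a)"
    using a(2) t(1) by (simp add: inner_add_right inner_commute)
  then have "\<phi> y \<le> \<phi> (y + t *\<^sub>R a)"
    using lsc_weak_upper_topology_mono assms(4) \<open>y \<in> D\<close> t(2) by blast
  moreover have "\<phi> (y + t *\<^sub>R a) = \<phi> y + t * inner x a"
    using assms(5) \<open>y \<in> D\<close> t(2) by (simp add: inner_add_right)
  ultimately show False
    using mult_pos_neg[OF t(1) a(1)] by (simp add: inner_commute)
qed

theorem mainTheorem8: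
  fixes C D :: "(real ^ 'n) set" and \<phi> :: "real ^ 'n \<Rightarrow> real"
  assumes "convex_cone C" and "closed C" and "interior C \<noteq> {}"
    and "convex_cone D" and "closed D" and "interior D \<noteq> {}"
    and "\<forall>c\<in>C. \<forall>d\<in>D. inner c d \<ge> 0"
    and "\<forall>y\<in>D. \<phi> y \<ge> 0"
    and "linear_on_cone D \<phi>"
    and "lsc_map (weak_upper_topology D C) \<phi>"
  shows "\<exists>!x. x \<in> C \<and> (\<forall>y\<in>D. \<phi> y = inner x y)"
proof -
  obtain x where rep: "\<forall>y\<in>D. \<phi> y = inner x y"
    using linear_on_cone_eq_inner assms(4,6,9) by blast
  moreover have "x \<in> C"
    using lsc_weak_upper_inner_mem_cone assms(1,2,6,10) rep by blast
  ultimately show ?thesis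
    using inner_eq_on_interior_imp_eq[OF assms(6)] by metis
qed

end
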